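(* Let $\mathbb{F}$ be a finite field and let $t,k,b,\ell$ be positive integers with $\ell<bk$. There exists a $t$-private $k$-party $\ell$-LMSSS over $\mathbb{F}$ in which every party's share lies in $\mathbb{F}^b$ (i.e. $b_1=\dots=b_k=b$) and whose access structure is $\Gamma=\{[k]\}$ (so its information rate is $\ell/(kb)$) if and only if there exists an $\mathbb{F}$-linear code $C\subseteq(\mathbb{F}^b)^k$ with rate at least $\ell/(kb)$ and distance at least $t+1$.
   Context: A $k$-party $\ell$-LMSSS over a finite field $\mathbb{F}$ with access structure $\Gamma$ (monotone increasing family of subsets of $[k]$) and adversary structure $\mathcal{T}$ (monotone decreasing, disjoint from $\Gamma$) is given by integers $e,b_1,\dots,b_k$ and an $\mathbb{F}$-linear map $\mathsf{Share}:\mathbb{F}^\ell\times\mathbb{F}^e\to\mathbb{F}^{b_1}\times\cdots\times\mathbb{F}^{b_k}$ such that for every $Q\in\Gamma$ a linear map recovers $\mathbf{x}$ from $\mathsf{Share}(\mathbf{x},\mathbf{r})_Q$ for all $\mathbf{x},\mathbf{r}$, and for every $U\in\mathcal{T}$ the distribution of $\mathsf{Share}(\mathbf{x},\mathbf{r})_U$ with $\mathbf{r}$ uniform in $\mathbb{F}^e$ does not depend on $\mathbf{x}$. It is $t$-private if $\mathcal{T}$ contains all subsets of size at most $t$; its information rate is $\ell/(b_1+\cdots+b_k)$. An $\mathbb{F}$-linear code with alphabet $\mathbb{F}^b$ and block length $k$ is an $\mathbb{F}$-linear subspace $C\subseteq(\mathbb{F}^b)^k$; its rate is $\dim_{\mathbb{F}}(C)/(bk)$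 and its distance is $\min_{c\ne c'\in C}|\{i\in[k]: c_i\ne c'_i\}|$. *)

theory Defs
  imports "HOL-Probability.Probability" "HOL-Library.Function_Algebras"
begin

(* Vectors in F^n are represented as functions nat => 'f vanishing outside {..<n}.
   Elements of (F^b)^k (share vectors / codewords) are functions
   nat => nat => 'f, s i j = j-th coordinate of party i's share, vanishing
   unless i < k and j < b.  Parties are indexed by {..<k} instead of [k]. *)

definition vecs :: "nat \<Rightarrow> (nat \<Rightarrow> 'f::zero) set" where
  "vecs n = {v. \<forall>i\<ge>n. v i = 0}"

definition words :: "nat \<Rightarrow> nat \<Rightarrow> (nat \<Rightarrow> nat \<Rightarrow> 'f::zero) set" where
  "words k b = {s. \<forall>i j. (k \<le> i \<or> b \<le> j) \<longrightarrow> s i j = 0}"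

definition wscale :: "'f::times \<Rightarrow> (nat \<Rightarrow> nat \<Rightarrow> 'f) \<Rightarrow> (nat \<Rightarrow> nat \<Rightarrow> 'f)" where
  "wscale c s = (\<lambda>i j. c * s i j)"

definition vscale :: "'f::times \<Rightarrow> (nat \<Rightarrow> 'f) \<Rightarrow> (nat \<Rightarrow> 'f)" where
  "vscale c v = (\<lambda>i. c * v i)"

definition restr :: "nat set \<Rightarrow> (nat \<Rightarrow> nat \<Rightarrow> 'f::zero) \<Rightarrow> (nat \<Rightarrow> nat \<Rightarrow> 'f)" where
  "restr Q s = (\<lambda>i j. if i \<in> Q then s i j else 0)"

definition share_linear ::
  "nat \<Rightarrow> nat \<Rightarrow> nat \<Rightarrow> nat \<Rightarrow>
   ((nat \<Rightarrow> 'f::field) \<Rightarrow> (nat \<Rightarrow> 'f) \<Rightarrow> (nat \<Rightarrow> nat \<Rightarrow> 'f)) \<Rightarrow> bool" where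
  "share_linear k b l e Share \<longleftrightarrow>
     (\<forall>x\<in>vecs l. \<forall>r\<in>vecs e. Share x r \<in> words k b) \<and>
     (\<forall>x\<in>vecs l. \<forall>r\<in>vecs e. \<forall>x'\<in>vecs l. \<forall>r'\<in>vecs e.
        Share (x + x') (r + r') = Share x r + Share x' r') \<and>
     (\<forall>x\<in>vecs l. \<forall>r\<in>vecs e. \<forall>c.
        Share (vscale c x) (vscale c r) = wscale c (Share x r))"

definition rec_linear :: "((nat \<Rightarrow> nat \<Rightarrow> 'f::field) \<Rightarrow> (nat \<Rightarrow> 'f)) \<Rightarrow> bool" where
  "rec_linear R \<longleftrightarrow> (\<forall>s s'. R (s + s') = R s + R s') \<and> (\<forall>c s. R (wscale c s) = vscale c (R s))"

definition recovers where
  "recovers l e Share Q \<longleftrightarrow>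
     (\<exists>R. rec_linear R \<and> (\<forall>x\<in>vecs l. \<forall>r\<in>vecs e. R (restr Q (Share x r)) = x))"

definition hides where
  "hides l e Share U \<longleftrightarrow>
     (\<forall>x\<in>vecs l. \<forall>x'\<in>vecs l.
        map_pmf (\<lambda>r. restr U (Share x r)) (pmf_of_set (vecs e)) =
        map_pmf (\<lambda>r. restr U (Share x' r)) (pmf_of_set (vecs e)))"

(* k-party l-LMSSS over 'f with randomness length e, share sizes all equal to b,
   access structure Acc and adversary structure T *)
definition is_LMSSS ::
  "nat \<Rightarrow> nat \<Rightarrow> nat \<Rightarrow> nat \<Rightarrow>
   ((nat \<Rightarrow> 'f::{field,finite}) \<Rightarrow> (nat \<Rightarrow> 'f) \<Rightarrow> (nat \<Rightarrow> nat \<Rightarrow> 'f)) \<Rightarrow>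
   nat set set \<Rightarrow> nat set set \<Rightarrow> bool" where
  "is_LMSSS k b l e Share Acc T \<longleftrightarrow>
     share_linear k b l e Share \<and>
     Acc \<subseteq> Pow {..<k} \<and> T \<subseteq> Pow {..<k} \<and>
     (\<forall>A\<in>Acc. \<forall>B. A \<subseteq> B \<and> B \<subseteq> {..<k} \<longrightarrow> B \<in> Acc) \<and>
     (\<forall>A\<in>T. \<forall>B. B \<subseteq> A \<longrightarrow> B \<in> T) \<and>
     Acc \<inter> T = {} \<and>
     (\<forall>Q\<in>Acc. recovers l e Share Q) \<and>
     (\<forall>U\<in>T. hides l e Share U)"

definition t_private :: "nat \<Rightarrow> nat \<Rightarrow> nat set set \<Rightarrow> bool" where
  "t_private k t T \<longleftrightarrow> (\<forall>U. U \<subseteq> {..<k} \<and> card U \<le> t \<longrightarrow> U \<in> T)"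

definition linear_code :: "nat \<Rightarrow> nat \<Rightarrow> (nat \<Rightarrow> nat \<Rightarrow> 'f::field) set \<Rightarrow> bool" where
  "linear_code k b C \<longleftrightarrow> C \<subseteq> words k b \<and> 0 \<in> C \<and>
     (\<forall>c\<in>C. \<forall>c'\<in>C. c + c' \<in> C) \<and> (\<forall>a. \<forall>c\<in>C. wscale a c \<in> C)"

definition code_dim :: "(nat \<Rightarrow> nat \<Rightarrow> 'f::field) set \<Rightarrow> nat" where
  "code_dim C = vector_space.dim wscale C"

definition code_rate :: "nat \<Rightarrow> nat \<Rightarrow> (nat \<Rightarrow> nat \<Rightarrow> 'f::field) set \<Rightarrow> real" where
  "code_rate k b C = real (code_dim C) / real (b * k)"

definition dist_atleast :: "nat \<Rightarrow> (nat \<Rightarrow> nat \<Rightarrow> 'f) set \<Rightarrow> nat \<Rightarrow> bool" where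
  "dist_atleast k C d \<longleftrightarrow>
     (\<forall>c\<in>C. \<forall>c'\<in>C. c \<noteq> c' \<longrightarrow> d \<le> card {i\<in>{..<k}. c i \<noteq> c' i})"

end

theory Submission
  imports Defs
begin

text \<open>
  Identify \<open>(F^b)^k\<close> with \<open>F^(kb)\<close> through the dot product \<open>wdot\<close>. Linear recovery by all
  parties is given by \<open>l\<close> functionals \<open>\<langle>c\<^sub>m, _\<rangle>\<close>; sharing the unit secrets shows that the
  \<open>c\<^sub>m\<close> are independent, so they span a code of dimension \<open>l\<close>. A nonzero codeword
  \<open>d = \<Sum> \<lambda>\<^sub>m c\<^sub>m\<close> reads only the shares of the parties in its support and evaluates to
  \<open>\<Sum> \<lambda>\<^sub>m x\<^sub>m\<close> on every sharing of \<open>x\<close>; were that support of size at most \<open>t\<close>, privacy would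
  make \<open>\<Sum> \<lambda>\<^sub>m x\<^sub>m\<close> independent of \<open>x\<close>, forcing \<open>\<lambda> = 0\<close>.

  Conversely, let \<open>c\<^sub>1, \<dots>, c\<^sub>l\<close> be independent in a code of distance \<open>t + 1\<close>. For a set \<open>U\<close> of
  at most \<open>t\<close> parties, a combination of the \<open>c\<^sub>m\<close> orthogonal to every word vanishing on \<open>U\<close> is a
  codeword supported in \<open>U\<close>, hence zero; so the functionals \<open>\<langle>c\<^sub>m, _\<rangle>\<close> admit a dual family
  \<open>u\<^sub>m\<close> of words vanishing on \<open>U\<close>. Share \<open>x\<close> as \<open>\<Sum> x\<^sub>m g\<^sub>m\<close> (with \<open>g\<close> the dual family for
  \<open>U = {}\<close>) plus a uniformly random word orthogonal to all \<open>c\<^sub>m\<close>. Shifting the randomness by the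
  orthogonal word \<open>\<Sum> x\<^sub>m (g\<^sub>m - u\<^sub>m)\<close> turns a sharing of \<open>x\<close> into a sharing of \<open>0\<close> that agrees with
  it on \<open>U\<close>, so \<open>U\<close> learns nothing.
\<close>

lemma sum_apply: "(\<Sum>a\<in>A. f a) x = (\<Sum>a\<in>A. f a x)"
  by (induction A rule: infinite_finite_induct) auto

lemma sum_sum_delta:
  assumes "finite A" "finite B" "a \<in> A" "b \<in> B"
  shows "(\<Sum>x\<in>A. \<Sum>y\<in>B. if x = a \<and> y = b then f x y else 0) = (f a b :: 'a::comm_monoid_add)"
proof -
  have "(\<Sum>y\<in>B. if x = a \<and> y = b then f x y else 0) = (if x = a then f x b else 0)" for x
    using assms by (cases "x = a") simp_all
  then show ?thesis using assms by simp
qed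

lemma zero_mem_vecs: "0 \<in> vecs n"
  by (simp add: vecs_def)

lemma vecs_nonempty: "vecs n \<noteq> {}"
  using zero_mem_vecs by blast

lemma delta_mem_vecs: "m < l \<Longrightarrow> (\<lambda>i. of_bool (i = m)) \<in> vecs l"
  by (simp add: vecs_def)

lemma finite_vecs: "finite (vecs n :: (nat \<Rightarrow> 'f::{finite,zero}) set)"
proof -
  let ?ext = "\<lambda>g i. if i < n then g i else 0"
  have "vecs n \<subseteq> ?ext ` ({..<n} \<rightarrow>\<^sub>E (UNIV :: 'f set))"
  proof
    fix v :: "nat \<Rightarrow> 'f" assume "v \<in> vecs n"
    then have "v = ?ext (restrict v {..<n})"
      by (auto simp: vecs_def fun_eq_iff)
    then show "v \<in> ?ext ` ({..<n} \<rightarrow>\<^sub>E UNIV)"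
      by (rule image_eqI[where x = "restrict v {..<n}"]) simp_all
  qed
  then show ?thesis by (rule finite_subset) (intro finite_imageI finite_PiE; simp)
qed

lemma finite_words: "finite (words k b :: (nat \<Rightarrow> nat \<Rightarrow> 'f::{finite,zero}) set)"
proof -
  let ?ext = "\<lambda>g i j. if i < k \<and> j < b then g (i, j) else 0"
  have "words k b \<subseteq> ?ext ` (({..<k} \<times> {..<b}) \<rightarrow>\<^sub>E (UNIV :: 'f set))"
  proof
    fix s :: "nat \<Rightarrow> nat \<Rightarrow> 'f" assume "s \<in> words k b"
    then have "s = ?ext (restrict (case_prod s) ({..<k} \<times> {..<b}))"
      by (auto simp: words_def fun_eq_iff)
    then show "s \<in> ?ext ` (({..<k} \<times> {..<b}) \<rightarrow>\<^sub>E UNIV)"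
      by (rule image_eqI[where x = "restrict (case_prod s) ({..<k} \<times> {..<b})"]) simp_all
  qed
  then show ?thesis by (rule finite_subset) (intro finite_imageI finite_PiE; simp)
qed

lemma restr_words: "s \<in> words k b \<Longrightarrow> restr {..<k} s = s"
  by (auto simp: restr_def words_def fun_eq_iff)

lemma map_pmf_translate_vecs:
  assumes "a \<in> vecs n"
  shows "map_pmf (\<lambda>r. r + a) (pmf_of_set (vecs n :: (nat \<Rightarrow> 'f::{ab_group_add,finite}) set))
           = pmf_of_set (vecs n)"
proof (rule map_pmf_of_set_bij_betw)
  show "bij_betw (\<lambda>r. r + a) (vecs n) (vecs n)"
    by (rule bij_betw_byWitness[where f' = "\<lambda>r. r - a"]) (use assms in \<open>auto simp: vecs_def\<close>)
qed (simp_all add: vecs_nonempty finite_vecs)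

section \<open>Words as a vector space\<close>

interpretation ws: vector_space "wscale :: 'f::field \<Rightarrow> (nat \<Rightarrow> nat \<Rightarrow> 'f) \<Rightarrow> _"
  by unfold_locales (auto simp: wscale_def fun_eq_iff algebra_simps)

lemma subspace_words: "ws.subspace (words k b :: (nat \<Rightarrow> nat \<Rightarrow> 'f::field) set)"
  by (auto simp: ws.subspace_def words_def wscale_def)

lemma linear_code_iff_subspace: "linear_code k b C \<longleftrightarrow> C \<subseteq> words k b \<and> ws.subspace C"
  by (auto simp: linear_code_def ws.subspace_def)

definition words_vanishing :: "nat \<Rightarrow> nat \<Rightarrow> nat set \<Rightarrow> (nat \<Rightarrow> nat \<Rightarrow> 'f::field) set" where
  "words_vanishing k b U = {z \<in> words k b. \<forall>i\<in>U. z i = 0}"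

lemma subspace_words_vanishing: "ws.subspace (words_vanishing k b U)"
  by (auto simp: ws.subspace_def words_vanishing_def words_def wscale_def fun_eq_iff)

lemma words_vanishing_empty [simp]: "words_vanishing k b {} = words k b"
  by (simp add: words_vanishing_def)

definition wdot :: "nat \<Rightarrow> nat \<Rightarrow> (nat \<Rightarrow> nat \<Rightarrow> 'f::field) \<Rightarrow> (nat \<Rightarrow> nat \<Rightarrow> 'f) \<Rightarrow> 'f" where
  "wdot k b c s = (\<Sum>i<k. \<Sum>j<b. c i j * s i j)"

lemma wdot_add [simp]: "wdot k b c (s + s') = wdot k b c s + wdot k b c s'"
  by (simp add: wdot_def algebra_simps sum.distrib)

lemma wdot_diff [simp]: "wdot k b c (s - s') = wdot k b c s - wdot k b c s'"
  by (simp add: wdot_def algebra_simps sum_subtractf)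

lemma wdot_wscale [simp]: "wdot k b c (wscale a s) = a * wdot k b c s"
  by (simp add: wdot_def wscale_def sum_distrib_left algebra_simps)

lemma wdot_zero [simp]: "wdot k b c 0 = 0" "wdot k b 0 s = 0"
  by (simp_all add: wdot_def)

lemma wdot_sum: "wdot k b c (\<Sum>m\<in>M. f m) = (\<Sum>m\<in>M. wdot k b c (f m))"
  unfolding wdot_def sum_apply sum_distrib_left by (simp add: sum.swap[of _ M])

lemma wdot_wscale_left: "wdot k b (wscale a c) s = a * wdot k b c s"
  by (simp add: wdot_def wscale_def sum_distrib_left algebra_simps)

lemma wdot_sum_left: "wdot k b (\<Sum>m\<in>M. f m) s = (\<Sum>m\<in>M. wdot k b (f m) s)"
  unfolding wdot_def sum_apply sum_distrib_right by (simp add: sum.swap[of _ M])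

lemma wdot_restr:
  assumes "\<And>i. i \<notin> U \<Longrightarrow> c i = 0"
  shows "wdot k b c (restr U s) = wdot k b c s"
  unfolding wdot_def restr_def using assms by (intro sum.cong refl) auto

definition unit_word :: "nat \<Rightarrow> nat \<Rightarrow> nat \<Rightarrow> nat \<Rightarrow> 'f::field" where
  "unit_word i j = (\<lambda>i' j'. if i' = i \<and> j' = j then 1 else 0)"

lemma wdot_unit_word:
  assumes "i < k" "j < b"
  shows "wdot k b c (unit_word i j) = c i j"
  using sum_sum_delta[of "{..<k}" "{..<b}" i j c] assms
  by (simp add: wdot_def unit_word_def if_distrib[of "times _"] cong: if_cong)

lemma words_unit_word_expansion:
  assumes "s \<in> words k b"
  shows "s = (\<Sum>i<k. \<Sum>j<b. wscale (s i j) (unit_word i j))"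
proof (intro ext)
  fix i' j'
  have "(\<Sum>i<k. \<Sum>j<b. wscale (s i j) (unit_word i j)) i' j'
          = (\<Sum>i<k. \<Sum>j<b. if i = i' \<and> j = j' then s i j else 0)"
    unfolding sum_apply wscale_def unit_word_def by (intro sum.cong refl) auto
  also have "\<dots> = s i' j'"
    using sum_sum_delta[of "{..<k}" "{..<b}" i' j' s] assms by (cases "i' < k \<and> j' < b") (auto simp: words_def)
  finally show "s i' j' = (\<Sum>i<k. \<Sum>j<b. wscale (s i j) (unit_word i j)) i' j'" ..
qed

lemma rec_linear_sum:
  assumes "rec_linear R"
  shows "R (\<Sum>m\<in>M. f m) = (\<Sum>m\<in>M. R (f m))"
proof -
  interpret R: additive R
    using assms by unfold_locales (simp add: rec_linear_def)
  show ?thesis by (rule R.sum)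
qed

lemma rec_linear_wdot_representation:
  fixes R :: "(nat \<Rightarrow> nat \<Rightarrow> 'f::field) \<Rightarrow> nat \<Rightarrow> 'f"
  assumes "rec_linear R"
  obtains c where "\<And>m. c m \<in> words k b" "\<And>s m. s \<in> words k b \<Longrightarrow> R s m = wdot k b (c m) s"
proof
  let ?c = "\<lambda>m i j. if i < k \<and> j < b then R (unit_word i j) m else 0"
  show "?c m \<in> words k b" for m by (simp add: words_def)
  fix s :: "nat \<Rightarrow> nat \<Rightarrow> 'f" and m assume "s \<in> words k b"
  then have "R s = R (\<Sum>i<k. \<Sum>j<b. wscale (s i j) (unit_word i j))"
    by (subst words_unit_word_expansion) auto
  also have "\<dots> = (\<Sum>i<k. \<Sum>j<b. vscale (s i j) (R (unit_word i j)))"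
    using assms by (simp add: rec_linear_sum rec_linear_def)
  finally show "R s m = wdot k b (?c m) s"
    by (simp add: sum_apply vscale_def wdot_def mult.commute)
qed

definition lincomb :: "nat \<Rightarrow> (nat \<Rightarrow> nat \<Rightarrow> nat \<Rightarrow> 'f::field) \<Rightarrow> (nat \<Rightarrow> 'f) \<Rightarrow> nat \<Rightarrow> nat \<Rightarrow> 'f" where
  "lincomb n c x = (\<Sum>m<n. wscale (x m) (c m))"

definition lin_indep :: "nat \<Rightarrow> (nat \<Rightarrow> nat \<Rightarrow> nat \<Rightarrow> 'f::field) \<Rightarrow> bool" where
  "lin_indep n c \<longleftrightarrow> (\<forall>x. lincomb n c x = 0 \<longrightarrow> (\<forall>m<n. x m = 0))"

lemma lincomb_add: "lincomb n c (x + y) = lincomb n c x + lincomb n c y"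
  by (simp add: lincomb_def ws.scale_left_distrib sum.distrib)

lemma lincomb_diff: "lincomb n c (x - y) = lincomb n c x - lincomb n c y"
  by (simp add: lincomb_def ws.scale_left_diff_distrib sum_subtractf)

lemma lincomb_vscale: "lincomb n c (vscale a x) = wscale a (lincomb n c x)"
  by (simp add: lincomb_def vscale_def ws.scale_sum_right)

lemma lincomb_zero [simp]: "lincomb n c 0 = 0"
  by (simp add: lincomb_def)

lemma lincomb_cong: "(\<And>m. m < n \<Longrightarrow> x m = y m) \<Longrightarrow> lincomb n c x = lincomb n c y"
  by (simp add: lincomb_def)

lemma lincomb_Suc: "lincomb (Suc n) c x = lincomb n c x + wscale (x n) (c n)"
  by (simp add: lincomb_def)

lemma lincomb_delta:
  assumes "i < n"
  shows "lincomb n c (\<lambda>m. of_bool (m = i)) = c i"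
proof -
  have "lincomb n c (\<lambda>m. of_bool (m = i)) = (\<Sum>m<n. if m = i then c m else 0)"
    unfolding lincomb_def by (intro sum.cong) (auto simp: wscale_def fun_eq_iff)
  with assms show ?thesis by simp
qed

lemma lincomb_mem_subspace:
  assumes "ws.subspace C" "\<And>m. m < n \<Longrightarrow> c m \<in> C"
  shows "lincomb n c x \<in> C"
  unfolding lincomb_def using assms by (intro ws.subspace_sum ws.subspace_scale) auto

lemma wdot_lincomb: "wdot k b d (lincomb n c x) = (\<Sum>m<n. x m * wdot k b d (c m))"
  by (simp add: lincomb_def wdot_sum)

lemma wdot_lincomb_left: "wdot k b (lincomb n c x) s = (\<Sum>m<n. x m * wdot k b (c m) s)"
  by (simp add: lincomb_def wdot_sum_left wdot_wscale_left)

lemma subspace_range_lincomb: "ws.subspace (range (lincomb n c))"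
proof (unfold ws.subspace_def, intro conjI ballI allI)
  show "0 \<in> range (lincomb n c)" by (metis lincomb_zero rangeI)
  show "x + y \<in> range (lincomb n c)" if "x \<in> range (lincomb n c)" "y \<in> range (lincomb n c)" for x y
    using that by (auto simp flip: lincomb_add)
  show "wscale a x \<in> range (lincomb n c)" if "x \<in> range (lincomb n c)" for a x
    using that by (auto simp flip: lincomb_vscale)
qed

lemma lin_indep_inj_on:
  fixes c :: "nat \<Rightarrow> nat \<Rightarrow> nat \<Rightarrow> 'f::field"
  assumes "lin_indep n c"
  shows "inj_on c {..<n}"
proof (rule inj_onI, rule ccontr)
  fix i j assume "i \<in> {..<n}" "j \<in> {..<n}" "c i = c j" "i \<noteq> j"
  let ?x = "(\<lambda>m. of_bool (m = i)) - (\<lambda>m. of_bool (m = j)) :: nat \<Rightarrow> 'f"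
  have "lincomb n c ?x = 0"
    using \<open>i \<in> {..<n}\<close> \<open>j \<in> {..<n}\<close> \<open>c i = c j\<close> by (simp add: lincomb_diff lincomb_delta)
  then have "?x i = 0" using assms \<open>i \<in> {..<n}\<close> unfolding lin_indep_def by blast
  with \<open>i \<noteq> j\<close> show False by simp
qed

lemma lin_indep_nonzero:
  fixes c :: "nat \<Rightarrow> nat \<Rightarrow> nat \<Rightarrow> 'f::field"
  assumes "lin_indep n c" "m < n"
  shows "c m \<noteq> 0"
proof
  assume "c m = 0"
  then have "lincomb n c (\<lambda>i. of_bool (i = m)) = 0" using assms(2) by (metis lincomb_delta)
  with assms have "(\<lambda>i. of_bool (i = m)) m = (0 :: 'f)" unfolding lin_indep_def by blast
  then show False by simp
qed

lemma dim_range_lincomb: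
  assumes "lin_indep n c"
  shows "ws.dim (range (lincomb n c)) = n"
proof -
  have inj: "inj_on c {..<n}" using assms by (rule lin_indep_inj_on)
  show ?thesis
  proof (rule ws.dim_unique[of "c ` {..<n}"])
    show "c ` {..<n} \<subseteq> range (lincomb n c)"
      by (metis image_subsetI lessThan_iff lincomb_delta rangeI)
    show "range (lincomb n c) \<subseteq> ws.span (c ` {..<n})"
    proof (rule image_subsetI)
      show "lincomb n c x \<in> ws.span (c ` {..<n})" for x
        unfolding lincomb_def by (intro ws.span_sum ws.span_scale ws.span_base) simp
    qed
    show "ws.independent (c ` {..<n})"
    proof (rule ws.independent_if_scalars_zero)
      fix f v assume "(\<Sum>v\<in>c ` {..<n}. wscale (f v) v) = 0" "v \<in> c ` {..<n}"
      then show "f v = 0"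
        using assms inj by (auto simp: lin_indep_def lincomb_def sum.reindex)
    qed simp
    show "card (c ` {..<n}) = n" using inj by (simp add: card_image)
  qed
qed

lemma obtain_lin_indep_family:
  fixes C :: "(nat \<Rightarrow> nat \<Rightarrow> 'f::field) set"
  assumes "finite C" "n \<le> ws.dim C"
  obtains c where "\<And>m. m < n \<Longrightarrow> c m \<in> C" "lin_indep n c"
proof -
  obtain B where B: "B \<subseteq> C" "ws.independent B" "card B = ws.dim C"
    by (rule ws.basis_exists)
  have "finite B" using B(1) assms(1) by (rule finite_subset)
  then obtain f where f: "bij_betw f {..<card B} B"
    using ex_bij_betw_nat_finite lessThan_atLeast0 by metis
  have inj: "inj_on f {..<n}" and fB: "f ` {..<n} \<subseteq> B"
    using f assms(2) B(3) by (auto simp: bij_betw_def intro: inj_on_subset)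
  show ?thesis
  proof
    show "f m \<in> C" if "m < n" for m using that fB B(1) by blast
    show "lin_indep n f"
      unfolding lin_indep_def lincomb_def
    proof (intro allI impI)
      fix x m assume sum0: "(\<Sum>m<n. wscale (x m) (f m)) = 0" and "m < n"
      let ?u = "\<lambda>v. x (inv_into {..<n} f v)"
      have "(\<Sum>v\<in>f ` {..<n}. wscale (?u v) v) = 0"
        using inj sum0 by (simp add: sum.reindex)
      then have "?u (f m) = 0"
        using ws.independentD[OF B(2) _ fB, of ?u "f m"] \<open>m < n\<close> by simp
      then show "x m = 0" using inj \<open>m < n\<close> by simp
    qed
  qed
qed

definition block_support :: "nat \<Rightarrow> (nat \<Rightarrow> nat \<Rightarrow> 'f::zero) \<Rightarrow> nat set" where
  "block_support k c = {i \<in> {..<k}. c i \<noteq> 0}"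

lemma dist_atleast_iff_min_weight:
  assumes "ws.subspace C"
  shows "dist_atleast k C d \<longleftrightarrow> (\<forall>c\<in>C. c \<noteq> 0 \<longrightarrow> d \<le> card (block_support k c))"
proof
  assume "dist_atleast k C d"
  then show "\<forall>c\<in>C. c \<noteq> 0 \<longrightarrow> d \<le> card (block_support k c)"
    using ws.subspace_0[OF assms] by (auto simp: dist_atleast_def block_support_def)
next
  assume weight: "\<forall>c\<in>C. c \<noteq> 0 \<longrightarrow> d \<le> card (block_support k c)"
  show "dist_atleast k C d"
    unfolding dist_atleast_def
  proof (intro ballI impI)
    fix c c' assume "c \<in> C" "c' \<in> C" "c \<noteq> c'"
    then have "d \<le> card (block_support k (c - c'))"
      using weight ws.subspace_diff[OF assms] by simp
    also have "block_support k (c - c') = {i \<in> {..<k}. c i \<noteq> c' i}"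
      by (simp add: block_support_def)
    finally show "d \<le> card {i \<in> {..<k}. c i \<noteq> c' i}" .
  qed
qed

lemma distance_le_length:
  assumes "linear_code k b C" "dist_atleast k C (t + 1)" "c \<in> C" "c \<noteq> 0"
  shows "t < k"
proof -
  have "t + 1 \<le> card (block_support k c)"
    using assms by (simp add: linear_code_iff_subspace dist_atleast_iff_min_weight)
  also have "\<dots> \<le> card {..<k}"
    by (rule card_mono) (auto simp: block_support_def)
  finally show ?thesis by simp
qed

section \<open>Dual families\<close>

definition dual_family ::
  "nat \<Rightarrow> nat \<Rightarrow> nat \<Rightarrow> (nat \<Rightarrow> nat \<Rightarrow> nat \<Rightarrow> 'f::field) \<Rightarrow> (nat \<Rightarrow> nat \<Rightarrow> nat \<Rightarrow> 'f) \<Rightarrow> bool" where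
  "dual_family k b n c u \<longleftrightarrow> (\<forall>m<n. \<forall>m'<n. wdot k b (c m') (u m) = of_bool (m' = m))"

lemma wdot_lincomb_dual:
  assumes "dual_family k b n c u" "m < n"
  shows "wdot k b (c m) (lincomb n u x) = x m"
proof -
  have "wdot k b (c m) (lincomb n u x) = (\<Sum>i<n. if i = m then x i else 0)"
    unfolding wdot_lincomb using assms by (intro sum.cong) (auto simp: dual_family_def)
  with assms(2) show ?thesis by simp
qed

text \<open>Projection onto the common kernel of the \<open>\<langle>c\<^sub>m, _\<rangle>\<close> along the span of \<open>u\<close>.\<close>

definition dual_proj ::
  "nat \<Rightarrow> nat \<Rightarrow> nat \<Rightarrow> (nat \<Rightarrow> nat \<Rightarrow> nat \<Rightarrow> 'f::field) \<Rightarrow> (nat \<Rightarrow> nat \<Rightarrow> nat \<Rightarrow> 'f)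
     \<Rightarrow> (nat \<Rightarrow> nat \<Rightarrow> 'f) \<Rightarrow> nat \<Rightarrow> nat \<Rightarrow> 'f" where
  "dual_proj k b n c u s = s - lincomb n u (\<lambda>m. wdot k b (c m) s)"

lemma wdot_dual_proj:
  assumes "dual_family k b n c u" "m < n"
  shows "wdot k b (c m) (dual_proj k b n c u s) = 0"
  using assms by (simp add: dual_proj_def wdot_lincomb_dual)

lemma dual_proj_eq_self:
  assumes "\<And>m. m < n \<Longrightarrow> wdot k b (c m) s = 0"
  shows "dual_proj k b n c u s = s"
proof -
  have "lincomb n u (\<lambda>m. wdot k b (c m) s) = lincomb n u 0"
    using assms by (intro lincomb_cong) simp
  then show ?thesis by (simp add: dual_proj_def)
qed

lemma dual_proj_add: "dual_proj k b n c u (s + s') = dual_proj k b n c u s + dual_proj k b n c u s'"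
proof -
  have "(\<lambda>m. wdot k b (c m) (s + s')) = (\<lambda>m. wdot k b (c m) s) + (\<lambda>m. wdot k b (c m) s')"
    by (simp add: fun_eq_iff)
  then show ?thesis by (simp add: dual_proj_def lincomb_add)
qed

lemma dual_proj_wscale: "dual_proj k b n c u (wscale a s) = wscale a (dual_proj k b n c u s)"
proof -
  have "(\<lambda>m. wdot k b (c m) (wscale a s)) = vscale a (\<lambda>m. wdot k b (c m) s)"
    by (simp add: fun_eq_iff vscale_def)
  then show ?thesis by (simp add: dual_proj_def lincomb_vscale ws.scale_right_diff_distrib)
qed

lemma dual_proj_mem_subspace:
  assumes "ws.subspace Z" "s \<in> Z" "\<And>m. m < n \<Longrightarrow> u m \<in> Z"
  shows "dual_proj k b n c u s \<in> Z"
  unfolding dual_proj_def using assms by (intro ws.subspace_diff lincomb_mem_subspace)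

lemma dual_family_extend:
  assumes Z: "ws.subspace Z" and u: "\<And>m. m < n \<Longrightarrow> u m \<in> Z" "dual_family k b n c u"
    and indep: "\<And>x. \<forall>z\<in>Z. wdot k b (lincomb (Suc n) c x) z = 0 \<Longrightarrow> x n = 0"
  obtains z where "z \<in> Z" "wdot k b (c n) z = 1" "\<And>m. m < n \<Longrightarrow> wdot k b (c m) z = 0"
proof -
  let ?P = "dual_proj k b n c u"
  have "\<exists>z\<in>Z. wdot k b (c n) (?P z) \<noteq> 0"
  proof (rule ccontr)
    assume "\<not> ?thesis"
    define x where "x m = (if m < n then wdot k b (c n) (u m) else -1)" for m
    have "wdot k b (lincomb (Suc n) c x) z = - wdot k b (c n) (?P z)" for z
    proof -
      have "wdot k b (lincomb (Suc n) c x) z = (\<Sum>m<n. x m * wdot k b (c m) z) - wdot k b (c n) z"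
        by (simp add: wdot_lincomb_left x_def)
      also have "(\<Sum>m<n. x m * wdot k b (c m) z) = (\<Sum>m<n. wdot k b (c m) z * wdot k b (c n) (u m))"
        by (intro sum.cong) (simp_all add: x_def)
      also have "\<dots> = wdot k b (c n) (lincomb n u (\<lambda>m. wdot k b (c m) z))"
        by (simp add: wdot_lincomb)
      finally show ?thesis by (simp add: dual_proj_def)
    qed
    with \<open>\<not> ?thesis\<close> have "x n = 0" by (intro indep) simp
    then show False by (simp add: x_def)
  qed
  then obtain z0 where z0: "z0 \<in> Z" "wdot k b (c n) (?P z0) \<noteq> 0" by blast
  show ?thesis
  proof
    let ?z = "wscale (inverse (wdot k b (c n) (?P z0))) (?P z0)"
    show "?z \<in> Z" using Z z0(1) u(1) by (intro ws.subspace_scale dual_proj_mem_subspace)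
    show "wdot k b (c n) ?z = 1" using z0(2) by simp
    show "wdot k b (c m) ?z = 0" if "m < n" for m using u(2) that by (simp add: wdot_dual_proj)
  qed
qed

lemma dual_family_Suc:
  assumes "dual_family k b n c u" "wdot k b (c n) z = 1" "\<And>m. m < n \<Longrightarrow> wdot k b (c m) z = 0"
  shows "dual_family k b (Suc n) c (\<lambda>m. if m < n then u m - wscale (wdot k b (c n) (u m)) z else z)"
  unfolding dual_family_def
proof (intro allI impI)
  fix m m' assume "m < Suc n" "m' < Suc n"
  show "wdot k b (c m') (if m < n then u m - wscale (wdot k b (c n) (u m)) z else z) = of_bool (m' = m)"
  proof (cases "m < n")
    case True
    with assms \<open>m' < Suc n\<close> show ?thesis
      by (cases "m' < n") (simp_all add: dual_family_def less_Suc_eq)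
  next
    case False
    with assms(2,3) \<open>m < Suc n\<close> \<open>m' < Suc n\<close> show ?thesis
      by (auto simp: less_Suc_eq)
  qed
qed

lemma dual_family_exists:
  assumes Z: "ws.subspace Z"
    and indep: "\<And>x. \<forall>z\<in>Z. wdot k b (lincomb n c x) z = 0 \<Longrightarrow> \<forall>m<n. x m = 0"
  obtains u where "\<And>m. m < n \<Longrightarrow> u m \<in> Z" "dual_family k b n c u"
proof -
  have "\<exists>u. (\<forall>m<n. u m \<in> Z) \<and> dual_family k b n c u"
    using indep
  proof (induction n)
    case 0
    show ?case by (simp add: dual_family_def)
  next
    case (Suc n)
    have "\<forall>m<n. x m = 0" if "\<forall>z\<in>Z. wdot k b (lincomb n c x) z = 0" for x
    proof -
      have "lincomb n c (x(n := 0)) = lincomb n c x"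
        by (rule lincomb_cong) simp
      then have "lincomb (Suc n) c (x(n := 0)) = lincomb n c x"
        by (simp add: lincomb_Suc)
      then have "\<forall>z\<in>Z. wdot k b (lincomb (Suc n) c (x(n := 0))) z = 0" using that by simp
      then have "\<forall>m<Suc n. (x(n := 0)) m = 0" by (rule Suc.prems)
      then show ?thesis by (metis fun_upd_other less_SucI less_irrefl_nat)
    qed
    then obtain u where u: "\<And>m. m < n \<Longrightarrow> u m \<in> Z" "dual_family k b n c u"
      using Suc.IH by blast
    obtain z where z: "z \<in> Z" "wdot k b (c n) z = 1" "\<And>m. m < n \<Longrightarrow> wdot k b (c m) z = 0"
      using dual_family_extend[OF Z u] Suc.prems by blast
    define u' where "u' m = (if m < n then u m - wscale (wdot k b (c n) (u m)) z else z)" for m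
    have "u' m \<in> Z" if "m < Suc n" for m
      using that u(1) z(1) Z by (auto simp: u'_def intro: ws.subspace_diff ws.subspace_scale)
    moreover have "dual_family k b (Suc n) c u'"
      unfolding u'_def by (rule dual_family_Suc[OF u(2) z(2,3)])
    ultimately show ?case by blast
  qed
  with that show ?thesis by blast
qed

section \<open>From a secret sharing scheme to a code\<close>

lemma hides_wdot_constant:
  fixes Share :: "(nat \<Rightarrow> 'f::{field,finite}) \<Rightarrow> (nat \<Rightarrow> 'f) \<Rightarrow> nat \<Rightarrow> nat \<Rightarrow> 'f"
  assumes "hides l e Share U" "x \<in> vecs l" "x' \<in> vecs l"
    and "\<And>i. i \<notin> U \<Longrightarrow> d i = 0"
    and "\<And>r. r \<in> vecs e \<Longrightarrow> wdot k b d (Share x r) = y"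
    and "\<And>r. r \<in> vecs e \<Longrightarrow> wdot k b d (Share x' r) = y'"
  shows "y = y'"
proof -
  let ?p = "pmf_of_set (vecs e) :: (nat \<Rightarrow> 'f) pmf"
  have observed: "map_pmf (wdot k b d) (map_pmf (\<lambda>r. restr U (Share z r)) ?p) = return_pmf w"
    if "\<And>r. r \<in> vecs e \<Longrightarrow> wdot k b d (Share z r) = w" for z w
  proof -
    have "map_pmf (wdot k b d) (map_pmf (\<lambda>r. restr U (Share z r)) ?p) = map_pmf (\<lambda>_. w) ?p"
      unfolding map_pmf_comp
      by (rule map_pmf_cong) (simp_all add: wdot_restr assms(4) that vecs_nonempty finite_vecs)
    then show ?thesis by simp
  qed
  have "return_pmf y = map_pmf (wdot k b d) (map_pmf (\<lambda>r. restr U (Share x r)) ?p)"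
    using observed[of x y] assms(5) by simp
  also have "\<dots> = map_pmf (wdot k b d) (map_pmf (\<lambda>r. restr U (Share x' r)) ?p)"
    using assms(1-3) unfolding hides_def by metis
  also have "\<dots> = return_pmf y'"
    using observed[of x' y'] assms(6) by simp
  finally show ?thesis by simp
qed

definition recovery_functionals ::
  "nat \<Rightarrow> nat \<Rightarrow> nat \<Rightarrow> nat \<Rightarrow> ((nat \<Rightarrow> 'f::field) \<Rightarrow> (nat \<Rightarrow> 'f) \<Rightarrow> nat \<Rightarrow> nat \<Rightarrow> 'f)
     \<Rightarrow> (nat \<Rightarrow> nat \<Rightarrow> nat \<Rightarrow> 'f) \<Rightarrow> bool" where
  "recovery_functionals k b l e Share c \<longleftrightarrow>
     (\<forall>x\<in>vecs l. \<forall>r\<in>vecs e. \<forall>m. wdot k b (c m) (Share x r) = x m)"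

lemma recovery_functionals_exist:
  fixes Share :: "(nat \<Rightarrow> 'f::{field,finite}) \<Rightarrow> (nat \<Rightarrow> 'f) \<Rightarrow> nat \<Rightarrow> nat \<Rightarrow> 'f"
  assumes "share_linear k b l e Share" "recovers l e Share {..<k}"
  obtains c where "\<And>m. c m \<in> words k b" "recovery_functionals k b l e Share c"
proof -
  obtain R where R: "rec_linear R" "\<And>x r. x \<in> vecs l \<Longrightarrow> r \<in> vecs e \<Longrightarrow> R (restr {..<k} (Share x r)) = x"
    using assms(2) by (auto simp: recovers_def)
  obtain c where c: "\<And>m. c m \<in> words k b" "\<And>s m. s \<in> words k b \<Longrightarrow> R s m = wdot k b (c m) s"
    using rec_linear_wdot_representation[OF R(1)] by blast
  have "wdot k b (c m) (Share x r) = x m" if "x \<in> vecs l" "r \<in> vecs e" for x r m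
  proof -
    have "Share x r \<in> words k b" using assms(1) that by (simp add: share_linear_def)
    then show ?thesis using R(2)[OF that] c(2) by (metis restr_words)
  qed
  then show ?thesis using that c(1) unfolding recovery_functionals_def by blast
qed

lemma wdot_lincomb_recovery:
  assumes "recovery_functionals k b l e Share c" "x \<in> vecs l" "r \<in> vecs e"
  shows "wdot k b (lincomb l c y) (Share x r) = (\<Sum>m<l. y m * x m)"
  using assms by (simp add: wdot_lincomb_left recovery_functionals_def)

lemma wdot_lincomb_recovery_delta:
  assumes "recovery_functionals k b l e Share c" "m < l" "r \<in> vecs e"
  shows "wdot k b (lincomb l c y) (Share (\<lambda>i. of_bool (i = m)) r) = y m"
  using wdot_lincomb_recovery[OF assms(1) delta_mem_vecs[OF assms(2)] assms(3)] assms(2) by simp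

lemma wdot_lincomb_recovery_zero:
  assumes "recovery_functionals k b l e Share c" "r \<in> vecs e"
  shows "wdot k b (lincomb l c y) (Share 0 r) = 0"
  using wdot_lincomb_recovery[OF assms(1) zero_mem_vecs assms(2)] by simp

lemma lin_indep_recovery_functionals:
  assumes "recovery_functionals k b l e Share c"
  shows "lin_indep l c"
  unfolding lin_indep_def
proof (intro allI impI)
  fix y m assume "lincomb l c y = 0" "m < l"
  then show "y m = 0"
    using wdot_lincomb_recovery_delta[OF assms \<open>m < l\<close> zero_mem_vecs, of y] by simp
qed

lemma recovery_functionals_min_weight:
  fixes Share :: "(nat \<Rightarrow> 'f::{field,finite}) \<Rightarrow> (nat \<Rightarrow> 'f) \<Rightarrow> nat \<Rightarrow> nat \<Rightarrow> 'f"
  assumes rec: "recovery_functionals k b l e Share c"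
    and c: "\<And>m. c m \<in> words k b"
    and hid: "\<And>U. U \<subseteq> {..<k} \<Longrightarrow> card U \<le> t \<Longrightarrow> hides l e Share U"
    and ne: "lincomb l c y \<noteq> 0"
  shows "t + 1 \<le> card (block_support k (lincomb l c y))"
proof (rule ccontr)
  let ?d = "lincomb l c y" and ?V = "block_support k (lincomb l c y)"
  assume "\<not> ?thesis"
  then have hidV: "hides l e Share ?V"
    by (intro hid) (auto simp: block_support_def)
  have "?d \<in> words k b"
    using c by (intro lincomb_mem_subspace subspace_words)
  then have d_outside: "?d i = 0" if "i \<notin> ?V" for i
    using that by (cases "i < k") (auto simp: block_support_def words_def fun_eq_iff)
  have "\<exists>m<l. y m \<noteq> 0"
  proof (rule ccontr)
    assume "\<not> (\<exists>m<l. y m \<noteq> 0)"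
    then have "lincomb l c y = lincomb l c 0" by (intro lincomb_cong) simp
    with ne show False by simp
  qed
  then obtain m where "m < l" "y m \<noteq> 0" by blast
  have "y m = 0"
    by (rule hides_wdot_constant[where k = k and b = b, OF hidV delta_mem_vecs[OF \<open>m < l\<close>] zero_mem_vecs d_outside])
       (use wdot_lincomb_recovery_delta[OF rec \<open>m < l\<close>] wdot_lincomb_recovery_zero[OF rec] in blast)+
  with \<open>y m \<noteq> 0\<close> show False ..
qed

lemma code_of_LMSSS:
  fixes Share :: "(nat \<Rightarrow> 'f::{field,finite}) \<Rightarrow> (nat \<Rightarrow> 'f) \<Rightarrow> nat \<Rightarrow> nat \<Rightarrow> 'f"
  assumes lmsss: "is_LMSSS k b l e Share {{..<k}} T" and priv: "t_private k t T"
  obtains C :: "(nat \<Rightarrow> nat \<Rightarrow> 'f) set"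
  where "linear_code k b C" "code_rate k b C \<ge> real l / real (k * b)" "dist_atleast k C (t + 1)"
proof -
  have "share_linear k b l e Share" "recovers l e Share {..<k}"
    using lmsss by (simp_all add: is_LMSSS_def)
  then obtain c where c: "\<And>m. c m \<in> words k b" and rec: "recovery_functionals k b l e Share c"
    using recovery_functionals_exist by blast
  have hid: "hides l e Share U" if "U \<subseteq> {..<k}" "card U \<le> t" for U
    using lmsss priv that by (simp add: is_LMSSS_def t_private_def)
  let ?C = "range (lincomb l c)"
  show ?thesis
  proof
    have "?C \<subseteq> words k b"
      using c by (auto intro: lincomb_mem_subspace[OF subspace_words])
    then show "linear_code k b ?C"
      by (simp add: linear_code_iff_subspace subspace_range_lincomb)
    show "code_rate k b ?C \<ge> real l / real (k * b)"
      using dim_range_lincomb[OF lin_indep_recovery_functionals[OF rec]]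
      by (simp add: code_rate_def code_dim_def mult.commute)
    show "dist_atleast k ?C (t + 1)"
      unfolding dist_atleast_iff_min_weight[OF subspace_range_lincomb]
      using recovery_functionals_min_weight[OF rec c hid] by auto
  qed
qed

section \<open>From a code to a secret sharing scheme\<close>

lemma lin_indep_on_words_vanishing:
  fixes c :: "nat \<Rightarrow> nat \<Rightarrow> nat \<Rightarrow> 'f::field"
  assumes C: "linear_code k b C" "dist_atleast k C (t + 1)"
    and c: "\<And>m. m < l \<Longrightarrow> c m \<in> C" "lin_indep l c"
    and U: "U \<subseteq> {..<k}" "card U \<le> t"
    and orth: "\<forall>z\<in>words_vanishing k b U. wdot k b (lincomb l c x) z = 0"
  shows "\<forall>m<l. x m = 0"
proof -
  let ?d = "lincomb l c x"
  have sub: "ws.subspace C" and "C \<subseteq> words k b" using C(1) by (simp_all add: linear_code_iff_subspace)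
  then have d: "?d \<in> C" "?d \<in> words k b" using c(1) by (auto intro: lincomb_mem_subspace)
  have "?d i j = 0" if "i < k" "i \<notin> U" for i j
  proof (cases "j < b")
    case True
    then have "(unit_word i j :: nat \<Rightarrow> nat \<Rightarrow> 'f) \<in> words_vanishing k b U"
      using that by (auto simp: words_vanishing_def words_def unit_word_def)
    then show ?thesis using orth wdot_unit_word[OF \<open>i < k\<close> True, of ?d] by simp
  next
    case False
    then show ?thesis using d(2) by (simp add: words_def)
  qed
  then have "block_support k ?d \<subseteq> U" by (auto simp: block_support_def)
  then have "card (block_support k ?d) \<le> card U"
    using U(1) by (intro card_mono) (auto intro: finite_subset)
  with U(2) have small: "card (block_support k ?d) \<le> t" by simp
  have "?d = 0"
  proof (rule ccontr)
    assume "?d \<noteq> 0"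
    then have "t + 1 \<le> card (block_support k ?d)"
      using C(2) d(1) dist_atleast_iff_min_weight[OF sub] by blast
    with small show False by simp
  qed
  with c(2) show ?thesis by (simp add: lin_indep_def)
qed

definition word_of_vec :: "nat \<Rightarrow> nat \<Rightarrow> (nat \<Rightarrow> 'f::zero) \<Rightarrow> nat \<Rightarrow> nat \<Rightarrow> 'f" where
  "word_of_vec k b r = (\<lambda>i j. if i < k \<and> j < b then r (i * b + j) else 0)"

lemma word_of_vec_words: "word_of_vec k b r \<in> words k b"
  by (simp add: word_of_vec_def words_def)

lemma word_of_vec_add:
  "word_of_vec k b (r + r') = word_of_vec k b r + word_of_vec k b (r' :: nat \<Rightarrow> 'f::monoid_add)"
  by (simp add: word_of_vec_def fun_eq_iff)

lemma word_of_vec_vscale: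
  "word_of_vec k b (vscale a r) = wscale a (word_of_vec k b (r :: nat \<Rightarrow> 'f::mult_zero))"
  by (simp add: word_of_vec_def vscale_def wscale_def fun_eq_iff)

lemma word_of_vec_surj:
  assumes "s \<in> words k b"
  obtains r where "r \<in> vecs (k * b)" "word_of_vec k b r = s"
proof
  let ?r = "\<lambda>n. if n < k * b then s (n div b) (n mod b) else 0"
  show "?r \<in> vecs (k * b)" by (simp add: vecs_def)
  have "?r (i * b + j) = s i j" if "i < k" "j < b" for i j
  proof -
    have "i * b + j < (i + 1) * b" using that by simp
    also have "\<dots> \<le> k * b" using that by (intro mult_le_mono1) simp
    finally show ?thesis using that by simp
  qed
  with assms show "word_of_vec k b ?r = s"
    by (auto simp: word_of_vec_def words_def fun_eq_iff)
qed

definition code_share ::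
  "nat \<Rightarrow> nat \<Rightarrow> nat \<Rightarrow> (nat \<Rightarrow> nat \<Rightarrow> nat \<Rightarrow> 'f::field) \<Rightarrow> (nat \<Rightarrow> nat \<Rightarrow> nat \<Rightarrow> 'f)
     \<Rightarrow> (nat \<Rightarrow> 'f) \<Rightarrow> (nat \<Rightarrow> 'f) \<Rightarrow> nat \<Rightarrow> nat \<Rightarrow> 'f" where
  "code_share k b l c g x r = lincomb l g x + dual_proj k b l c g (word_of_vec k b r)"

lemma code_share_words:
  assumes "\<And>m. m < l \<Longrightarrow> g m \<in> words k b"
  shows "code_share k b l c g x r \<in> words k b"
  unfolding code_share_def using assms subspace_words word_of_vec_words
  by (intro ws.subspace_add lincomb_mem_subspace dual_proj_mem_subspace)

lemma share_linear_code_share: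
  assumes "\<And>m. m < l \<Longrightarrow> g m \<in> words k b"
  shows "share_linear k b l e (code_share k b l c g)"
  unfolding share_linear_def
proof (intro conjI ballI allI)
  fix x r x' r' c'
  show "code_share k b l c g x r \<in> words k b" using assms by (rule code_share_words)
  show "code_share k b l c g (x + x') (r + r') = code_share k b l c g x r + code_share k b l c g x' r'"
    by (simp add: code_share_def lincomb_add word_of_vec_add dual_proj_add algebra_simps)
  show "code_share k b l c g (vscale c' x) (vscale c' r) = wscale c' (code_share k b l c g x r)"
    by (simp add: code_share_def lincomb_vscale word_of_vec_vscale dual_proj_wscale ws.scale_right_distrib)
qed

lemma wdot_code_share:
  assumes "dual_family k b l c g" "m < l"
  shows "wdot k b (c m) (code_share k b l c g x r) = x m"
  using assms by (simp add: code_share_def wdot_lincomb_dual wdot_dual_proj)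

lemma recovers_code_share:
  fixes c g :: "nat \<Rightarrow> nat \<Rightarrow> nat \<Rightarrow> 'f::field"
  assumes "dual_family k b l c g" "\<And>m. m < l \<Longrightarrow> g m \<in> words k b"
  shows "recovers l e (code_share k b l c g) {..<k}"
  unfolding recovers_def
proof (intro exI conjI ballI)
  let ?R = "\<lambda>s i. if i < l then wdot k b (c i) s else 0"
  show "rec_linear ?R"
    by (auto simp: rec_linear_def fun_eq_iff vscale_def)
  fix x r :: "nat \<Rightarrow> 'f" assume x: "x \<in> vecs l"
  have restr_eq: "restr {..<k} (code_share k b l c g x r) = code_share k b l c g x r"
    using assms(2) by (intro restr_words[where b = b] code_share_words)
  show "?R (restr {..<k} (code_share k b l c g x r)) = x"
    unfolding restr_eq using x assms(1) by (simp add: wdot_code_share vecs_def fun_eq_iff)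
qed

lemma hides_code_share:
  fixes g u :: "nat \<Rightarrow> nat \<Rightarrow> nat \<Rightarrow> 'f::{field,finite}"
  assumes g: "dual_family k b l c g" "\<And>m. m < l \<Longrightarrow> g m \<in> words k b"
    and u: "dual_family k b l c u" "\<And>m. m < l \<Longrightarrow> u m \<in> words_vanishing k b U"
  shows "hides l (k * b) (code_share k b l c g) U"
proof -
  let ?S = "code_share k b l c g" and ?p = "pmf_of_set (vecs (k * b)) :: (nat \<Rightarrow> 'f) pmf"
  have shift: "map_pmf (\<lambda>r. restr U (?S x r)) ?p = map_pmf (\<lambda>r. restr U (?S 0 r)) ?p" for x
  proof -
    let ?y = "lincomb l g x - lincomb l u x"
    have "?y \<in> words k b"
      using g(2) u(2) subspace_words
      by (auto simp: words_vanishing_def intro!: ws.subspace_diff lincomb_mem_subspace)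
    then obtain a where a: "a \<in> vecs (k * b)" "word_of_vec k b a = ?y"
      by (rule word_of_vec_surj)
    have "dual_proj k b l c g ?y = ?y"
      using g(1) u(1) by (intro dual_proj_eq_self) (simp add: wdot_lincomb_dual)
    then have "?S 0 (r + a) = ?S x r - lincomb l u x" for r
      by (simp add: code_share_def word_of_vec_add dual_proj_add a(2))
    moreover have "lincomb l u x \<in> words_vanishing k b U"
      using u(2) by (rule lincomb_mem_subspace[OF subspace_words_vanishing])
    ultimately have "restr U (?S x r) = restr U (?S 0 (r + a))" for r
      by (auto simp: restr_def words_vanishing_def fun_eq_iff)
    then have "map_pmf (\<lambda>r. restr U (?S x r)) ?p = map_pmf (\<lambda>r. restr U (?S 0 r)) (map_pmf (\<lambda>r. r + a) ?p)"
      by (simp add: map_pmf_comp)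
    also have "\<dots> = map_pmf (\<lambda>r. restr U (?S 0 r)) ?p"
      using a(1) by (simp add: map_pmf_translate_vecs)
    finally show ?thesis .
  qed
  show ?thesis unfolding hides_def using shift by metis
qed

lemma threshold_LMSSS:
  fixes Share :: "(nat \<Rightarrow> 'f::{field,finite}) \<Rightarrow> (nat \<Rightarrow> 'f) \<Rightarrow> nat \<Rightarrow> nat \<Rightarrow> 'f"
  assumes "share_linear k b l e Share" "recovers l e Share {..<k}" "t < k"
    and "\<And>U. U \<subseteq> {..<k} \<Longrightarrow> card U \<le> t \<Longrightarrow> hides l e Share U"
  defines "T \<equiv> {U. U \<subseteq> {..<k} \<and> card U \<le> t}"
  shows "is_LMSSS k b l e Share {{..<k}} T" "t_private k t T"
proof -
  have down_closed: "B \<in> T" if "A \<in> T" "B \<subseteq> A" for A B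
  proof -
    from that have A: "A \<subseteq> {..<k}" "card A \<le> t" by (simp_all add: T_def)
    then have "card B \<le> card A" using \<open>B \<subseteq> A\<close> by (meson card_mono finite_lessThan finite_subset)
    with A \<open>B \<subseteq> A\<close> show ?thesis unfolding T_def by auto
  qed
  show "is_LMSSS k b l e Share {{..<k}} T"
    unfolding is_LMSSS_def
  proof (intro conjI)
    show "{{..<k}} \<inter> T = {}" using assms(3) by (auto simp: T_def)
    show "\<forall>A\<in>T. \<forall>B. B \<subseteq> A \<longrightarrow> B \<in> T" using down_closed by blast
    show "\<forall>U\<in>T. hides l e Share U" using assms(4) by (simp add: T_def)
    show "\<forall>Q\<in>{{..<k}}. recovers l e Share Q" using assms(2) by simp
  qed (use assms(1) in \<open>auto simp: T_def\<close>)
  show "t_private k t T" by (simp add: t_private_def T_def)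
qed

lemma LMSSS_of_code:
  fixes C :: "(nat \<Rightarrow> nat \<Rightarrow> 'f::{field,finite}) set"
  assumes "0 < k" "0 < b" "0 < l"
    and code: "linear_code k b C" "code_rate k b C \<ge> real l / real (k * b)" "dist_atleast k C (t + 1)"
  obtains Share :: "(nat \<Rightarrow> 'f) \<Rightarrow> (nat \<Rightarrow> 'f) \<Rightarrow> nat \<Rightarrow> nat \<Rightarrow> 'f" and T
  where "is_LMSSS k b l (k * b) Share {{..<k}} T" "t_private k t T"
proof -
  have "finite C" using code(1) finite_words by (auto simp: linear_code_def intro: finite_subset)
  moreover have "l \<le> ws.dim C"
    using code(2) assms(1,2) by (simp add: code_rate_def code_dim_def divide_le_cancel mult.commute)
  ultimately obtain c where c: "\<And>m. m < l \<Longrightarrow> c m \<in> C" "lin_indep l c"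
    using obtain_lin_indep_family by blast
  have dual: "\<exists>u. (\<forall>m<l. u m \<in> words_vanishing k b U) \<and> dual_family k b l c u"
    if "U \<subseteq> {..<k}" "card U \<le> t" for U
    using dual_family_exists[OF subspace_words_vanishing lin_indep_on_words_vanishing[OF code(1,3) c that]]
    by blast
  then obtain g where g: "dual_family k b l c g" "\<And>m. m < l \<Longrightarrow> g m \<in> words k b"
    by (metis card.empty empty_subsetI words_vanishing_empty zero_le)
  have "t < k"
    using distance_le_length[OF code(1,3) c(1) lin_indep_nonzero[OF c(2)]] assms(3) by blast
  moreover have "hides l (k * b) (code_share k b l c g) U" if U: "U \<subseteq> {..<k}" "card U \<le> t" for U
  proof -
    obtain u where "\<forall>m<l. u m \<in> words_vanishing k b U" "dual_family k b l c u"
      using dual[OF U] by blast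
    then show ?thesis using hides_code_share[OF g] by blast
  qed
  ultimately show ?thesis
    using threshold_LMSSS[OF share_linear_code_share[OF g(2)] recovers_code_share[OF g]] that
    by blast
qed

theorem mainTheorem2:
  fixes t k b l :: nat
  assumes "0 < t" "0 < k" "0 < b" "0 < l" "l < b * k"
  shows "(\<exists>(e::nat) (Share :: (nat \<Rightarrow> 'f::{field,finite}) \<Rightarrow> (nat \<Rightarrow> 'f) \<Rightarrow> (nat \<Rightarrow> nat \<Rightarrow> 'f)) T.
            is_LMSSS k b l e Share {{..<k}} T \<and> t_private k t T)
     \<longleftrightarrow>
         (\<exists>C :: (nat \<Rightarrow> nat \<Rightarrow> 'f) set.
            linear_code k b C \<and> code_rate k b C \<ge> real l / real (k * b) \<and>
            dist_atleast k C (t + 1))"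
proof
  assume "\<exists>e (Share :: (nat \<Rightarrow> 'f) \<Rightarrow> (nat \<Rightarrow> 'f) \<Rightarrow> (nat \<Rightarrow> nat \<Rightarrow> 'f)) T.
            is_LMSSS k b l e Share {{..<k}} T \<and> t_private k t T"
  then obtain e and Share :: "(nat \<Rightarrow> 'f) \<Rightarrow> (nat \<Rightarrow> 'f) \<Rightarrow> (nat \<Rightarrow> nat \<Rightarrow> 'f)" and T
    where "is_LMSSS k b l e Share {{..<k}} T" "t_private k t T" by blast
  then obtain C :: "(nat \<Rightarrow> nat \<Rightarrow> 'f) set"
    where "linear_code k b C" "code_rate k b C \<ge> real l / real (k * b)" "dist_atleast k C (t + 1)"
    by (rule code_of_LMSSS)
  then show "\<exists>C :: (nat \<Rightarrow> nat \<Rightarrow> 'f) set. linear_code k b C \<and>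
      code_rate k b C \<ge> real l / real (k * b) \<and> dist_atleast k C (t + 1)" by blast
next
  assume "\<exists>C :: (nat \<Rightarrow> nat \<Rightarrow> 'f) set. linear_code k b C \<and>
      code_rate k b C \<ge> real l / real (k * b) \<and> dist_atleast k C (t + 1)"
  then obtain C :: "(nat \<Rightarrow> nat \<Rightarrow> 'f) set"
    where "linear_code k b C" "code_rate k b C \<ge> real l / real (k * b)" "dist_atleast k C (t + 1)"
    by blast
  with assms(2-4) obtain Share :: "(nat \<Rightarrow> 'f) \<Rightarrow> (nat \<Rightarrow> 'f) \<Rightarrow> (nat \<Rightarrow> nat \<Rightarrow> 'f)" and T
    where "is_LMSSS k b l (k * b) Share {{..<k}} T" "t_private k t T"
    by (rule LMSSS_of_code)
  then show "\<exists>e (Share :: (nat \<Rightarrow> 'f) \<Rightarrow> (nat \<Rightarrow> 'f) \<Rightarrow> (nat \<Rightarrow> nat \<Rightarrow> 'f)) T.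
      is_LMSSS k b l e Share {{..<k}} T \<and> t_private k t T" by blast
qed

end
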